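(* Let $A, B, C \subseteq\omega$ with $B$ and $C$ infinite. If $A$ is c.e. relative to every infinite subset of $B$, and $B$ is c.e. relative to every infinite subset of $C$, then $A$ is c.e. relative to every infinite subset of $C$. *)

theory Defs
  imports Main
begin

text \<open>Arguments are lists of naturals; out-of-range arguments default to 0.\<close>

datatype recf =
    Zero
  | Succ
  | Proj nat
  | Orc
  | Comp recf "recf list"
  | Prec recf recf
  | Mn recf

definition arg :: "nat list \<Rightarrow> nat \<Rightarrow> nat" where
  "arg xs i = (if i < length xs then xs ! i else 0)"

inductive eval :: "nat set \<Rightarrow> recf \<Rightarrow> nat list \<Rightarrow> nat \<Rightarrow> bool" for X where
  zero: "eval X Zero xs 0"
| succ: "eval X Succ xs (Suc (arg xs 0))"
| proj: "eval X (Proj i) xs (arg xs i)"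
| orc: "eval X Orc xs (if arg xs 0 \<in> X then 1 else 0)"
| comp: "\<lbrakk>length ys = length gs; \<forall>i<length gs. eval X (gs ! i) xs (ys ! i);
          eval X f ys v\<rbrakk> \<Longrightarrow> eval X (Comp f gs) xs v"
| prec0: "eval X f xs v \<Longrightarrow> eval X (Prec f g) (0 # xs) v"
| precS: "\<lbrakk>eval X (Prec f g) (n # xs) r; eval X g (n # r # xs) v\<rbrakk>
          \<Longrightarrow> eval X (Prec f g) (Suc n # xs) v"
| mn: "\<lbrakk>eval X f (n # xs) 0; \<forall>m<n. \<exists>v. v > 0 \<and> eval X f (m # xs) v\<rbrakk>
          \<Longrightarrow> eval X (Mn f) xs n"

definition ce_in :: "nat set \<Rightarrow> nat set \<Rightarrow> bool" where
  "ce_in A X \<longleftrightarrow> (\<exists>f. \<forall>x. x \<in> A \<longleftrightarrow> (\<exists>v. eval X f [x] v))"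

end

theory Submission
  imports Defs
begin

text \<open>Let \<open>Y \<subseteq> C\<close> be infinite. Then \<open>B\<close> is c.e. in \<open>Y\<close>, and every infinite set that is
  c.e. in \<open>Y\<close> has an infinite subset \<open>Z\<close> decidable in \<open>Y\<close>: a clocked version of the
  enumeration of \<open>B\<close> is \<open>Y\<close>-computable, so \<open>Y\<close> can search for the first stage at which
  some element \<open>\<ge> p\<close> of \<open>B\<close> shows up; iterating this selector yields a strictly increasing
  \<open>Y\<close>-computable sequence in \<open>B\<close>, whose range \<open>Z\<close> is \<open>Y\<close>-decidable. Since \<open>Z \<subseteq> B\<close> is
  infinite, \<open>A\<close> is c.e. in \<open>Z\<close>, and answering the oracle queries to \<open>Z\<close> by the decision
  procedure makes \<open>A\<close> c.e. in \<open>Y\<close>.\<close>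

lemma arg_Cons_0 [simp]: "arg (x # xs) 0 = x"
  and arg_Cons_Suc [simp]: "arg (x # xs) (Suc i) = arg xs i"
  and arg_Cons_1 [simp]: "arg (x # xs) 1 = arg xs 0"
  and arg_Cons_numeral [simp]: "arg (x # xs) (numeral n) = arg xs (pred_numeral n)"
  by (auto simp: arg_def numeral_eq_Suc)

inductive_cases eval_ZeroE: "eval X Zero xs v"
inductive_cases eval_SuccE: "eval X Succ xs v"
inductive_cases eval_ProjE: "eval X (Proj i) xs v"
inductive_cases eval_OrcE: "eval X Orc xs v"
inductive_cases eval_CompE: "eval X (Comp f gs) xs v"
inductive_cases eval_PrecE: "eval X (Prec f g) xs v"
inductive_cases eval_MnE: "eval X (Mn f) xs v"

lemma eval_deterministic: "eval X f xs v \<Longrightarrow> eval X f xs w \<Longrightarrow> v = w"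
proof (induction arbitrary: w rule: eval.induct)
  case (comp ys gs xs f v)
  from comp.prems obtain ys' where "length ys' = length gs"
    and "\<forall>i<length gs. eval X (gs ! i) xs (ys' ! i)" and "eval X f ys' w"
    by (rule eval_CompE) auto
  moreover from calculation have "ys = ys'"
    using comp.hyps(1) comp.IH(1) by (intro nth_equalityI) auto
  ultimately show ?case using comp.IH(2) by blast
next
  case (prec0 f xs v g)
  from prec0.prems show ?case by (rule eval_PrecE) (use prec0.IH in auto)
next
  case (precS f g n xs r v)
  from precS.prems show ?case by (rule eval_PrecE) (use precS.IH in auto)
next
  case (mn f n xs)
  from mn.prems have zero_at_w: "eval X f (w # xs) 0"
    and pos_below_w: "\<forall>m<w. \<exists>v>0. eval X f (m # xs) v"
    by (auto elim: eval_MnE)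
  have "\<not> n < w" using pos_below_w mn.IH(1) by fastforce
  moreover have "\<not> w < n" using mn.IH(2) zero_at_w by fastforce
  ultimately show ?case by simp
qed (auto elim: eval_ZeroE eval_SuccE eval_ProjE eval_OrcE)

lemma eval_result_cong: "eval X f xs v \<Longrightarrow> v = w \<Longrightarrow> eval X f xs w"
  by simp

lemma eval_Comp:
  "list_all2 (\<lambda>g y. eval X g xs y) gs ys \<Longrightarrow> eval X f ys v \<Longrightarrow> eval X (Comp f gs) xs v"
  by (rule eval.comp) (auto simp: list_all2_conv_all_nth)

lemma eval_Comp1: "eval X g xs y \<Longrightarrow> eval X f [y] v \<Longrightarrow> eval X (Comp f [g]) xs v"
  by (rule eval_Comp[where ys="[y]"]) auto

lemma eval_Comp2:
  "eval X g1 xs y1 \<Longrightarrow> eval X g2 xs y2 \<Longrightarrow> eval X f [y1, y2] v \<Longrightarrow> eval X (Comp f [g1, g2]) xs v"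
  by (rule eval_Comp[where ys="[y1, y2]"]) simp_all

lemma eval_Comp3:
  "eval X g1 xs y1 \<Longrightarrow> eval X g2 xs y2 \<Longrightarrow> eval X g3 xs y3 \<Longrightarrow> eval X f [y1, y2, y3] v \<Longrightarrow>
   eval X (Comp f [g1, g2, g3]) xs v"
  by (rule eval_Comp[where ys="[y1, y2, y3]"]) simp_all

lemma eval_Proj_nth: "i < length xs \<Longrightarrow> eval X (Proj i) xs (xs ! i)"
  using eval.proj[of X i xs] by (simp add: arg_def)

lemma eval_Proj_shifted:
  "length pre = d \<Longrightarrow>
   list_all2 (\<lambda>g y. eval X g (pre @ ys) y) (map (\<lambda>i. Proj (i + d)) [0..<length ys]) ys"
  using eval_Proj_nth[of "_ + d" "pre @ ys" X]
  by (auto simp: list_all2_conv_all_nth nth_append)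

lemma eval_const_1: "eval X (Comp Succ [Zero]) xs 1"
  using eval_Comp1[OF eval.zero eval.succ] by simp

lemma eval_Prec_total:
  assumes "eval X f xs a" and "\<And>m r. eval X g (m # r # xs) (G m r)"
  shows "eval X (Prec f g) (n # xs) (rec_nat a G n)"
  by (induction n) (auto intro: eval.prec0 eval.precS assms)

lemma eval_Mn_Least:
  assumes "\<And>m. eval X f (m # xs) (h m)" and "h n = 0"
  shows "eval X (Mn f) xs (LEAST n. h n = 0)"
proof (rule eval.mn)
  show "eval X f ((LEAST n. h n = 0) # xs) 0"
    using assms(1) LeastI[of "\<lambda>n. h n = 0", OF assms(2)] by metis
  show "\<forall>m<(LEAST n. h n = 0). \<exists>v>0. eval X f (m # xs) v"
    using assms(1) not_less_Least by blast
qed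

section \<open>Primitive recursive building blocks\<close>

definition Pred :: recf where
  "Pred = Prec Zero (Proj 0)"

lemma eval_Pred: "eval X Pred [a] (a - 1)"
proof -
  have "eval X Pred [a] (rec_nat 0 (\<lambda>m r. m) a)"
    unfolding Pred_def by (rule eval_Prec_total) (auto intro: eval.zero eval.proj[THEN eval_result_cong])
  then show ?thesis by (cases a) simp_all
qed

lemma eval_Comp_Pred: "eval X g xs a \<Longrightarrow> eval X (Comp Pred [g]) xs (a - 1)"
  by (rule eval_Comp1[OF _ eval_Pred])

definition Monus :: recf where
  "Monus = Comp (Prec (Proj 0) (Comp Pred [Proj 1])) [Proj 1, Proj 0]"

lemma eval_Monus: "eval X Monus [a, b] (a - b)"
proof -
  have "eval X (Prec (Proj 0) (Comp Pred [Proj 1])) [b, a] (rec_nat a (\<lambda>m r. r - 1) b)"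
  proof (rule eval_Prec_total)
    show "eval X (Comp Pred [Proj 1]) [m, r, a] (r - 1)" for m r
      using eval_Comp_Pred[OF eval.proj[of X 1 "[m, r, a]"]] by simp
  qed (auto intro: eval.proj[THEN eval_result_cong])
  moreover have "rec_nat a (\<lambda>m r. r - 1) b = a - b" by (induction b) simp_all
  ultimately show ?thesis
    unfolding Monus_def using eval_Comp2[OF eval.proj[of X 1 "[a, b]"] eval.proj[of X 0 "[a, b]"]] by simp
qed

lemma eval_Comp_Monus:
  "eval X g1 xs a \<Longrightarrow> eval X g2 xs b \<Longrightarrow> eval X (Comp Monus [g1, g2]) xs (a - b)"
  by (rule eval_Comp2[OF _ _ eval_Monus])

definition IfZ :: recf where
  "IfZ = Prec (Proj 0) (Proj 3)"

lemma eval_IfZ: "eval X IfZ [a, b, c] (if a = 0 then b else c)"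
proof -
  have "eval X IfZ [a, b, c] (rec_nat b (\<lambda>m r. c) a)"
    unfolding IfZ_def by (rule eval_Prec_total) (auto intro: eval.proj[THEN eval_result_cong])
  then show ?thesis by (cases a) simp_all
qed

definition ifz :: "recf \<Rightarrow> recf \<Rightarrow> recf \<Rightarrow> recf" where
  "ifz a b c = Comp IfZ [a, b, c]"

lemma eval_ifz:
  "eval X a xs x \<Longrightarrow> eval X b xs y \<Longrightarrow> eval X c xs z \<Longrightarrow>
   eval X (ifz a b c) xs (if x = 0 then y else z)"
  unfolding ifz_def by (rule eval_Comp3[OF _ _ _ eval_IfZ])

fun guard_nonzero :: "recf list \<Rightarrow> recf \<Rightarrow> recf" where
  "guard_nonzero [] e = e"
| "guard_nonzero (h # hs) e = ifz h Zero (guard_nonzero hs e)"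

lemma eval_guard_nonzero:
  "list_all2 (\<lambda>h y. eval X h xs y) hs ys \<Longrightarrow> eval X e xs w \<Longrightarrow>
   eval X (guard_nonzero hs e) xs (if list_all (\<lambda>y. y \<noteq> 0) ys then w else 0)"
proof (induction hs arbitrary: ys)
  case (Cons h hs)
  then obtain y ys' where ys: "ys = y # ys'" and "eval X h xs y"
    and "list_all2 (\<lambda>h y. eval X h xs y) hs ys'"
    by (cases ys) auto
  then have "eval X (guard_nonzero (h # hs) e) xs
      (if y = 0 then 0 else if list_all (\<lambda>y. y \<noteq> 0) ys' then w else 0)"
    using eval_ifz[OF _ eval.zero Cons.IH[OF _ Cons.prems(2)]] by simp
  then show ?case using ys by (simp split: if_splits)
qed simp

section \<open>Clocked evaluation\<close>

text \<open>Every \<open>Mn\<close>-search is cut off after \<open>s\<close> candidates. Results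
  are lifted, \<open>0\<close> meaning ``no value within the clock'' and \<open>Suc v\<close> meaning value \<open>v\<close>.
  The state of a search is \<open>1\<close> while it runs, \<open>Suc (Suc m)\<close> once it has found \<open>m\<close>,
  and \<open>0\<close> once it met an undefined value.\<close>

definition search_state :: "(nat \<Rightarrow> nat) \<Rightarrow> nat \<Rightarrow> nat" where
  "search_state t = rec_nat 1
     (\<lambda>c S. if S = 1 then (if t c = 0 then 0 else if t c = 1 then Suc (Suc c) else 1) else S)"

lemma search_state_0 [simp]: "search_state t 0 = 1"
  and search_state_Suc [simp]: "search_state t (Suc c) =
    (if search_state t c = 1 then (if t c = 0 then 0 else if t c = 1 then Suc (Suc c) else 1)
     else search_state t c)"
  by (simp_all add: search_state_def)

lemma search_state_Suc_eq_1: "search_state t (Suc c) = 1 \<longleftrightarrow> search_state t c = 1 \<and> 2 \<le> t c"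
  by simp

lemma search_state_running: "search_state t c = 1 \<Longrightarrow> i < c \<Longrightarrow> 2 \<le> t i"
  using search_state_Suc_eq_1 by (induction c) (auto simp: less_Suc_eq simp del: search_state_Suc)

lemma search_state_found:
  "search_state t c = Suc (Suc m) \<Longrightarrow> m < c \<and> t m = 1 \<and> (\<forall>i<m. 2 \<le> t i)"
proof (induction c)
  case (Suc c)
  show ?case
  proof (cases "search_state t c = 1")
    case True
    with Suc.prems show ?thesis
      by (auto split: if_splits intro: search_state_running)
  next
    case False
    with Suc show ?thesis by simp
  qed
qed simp

lemma search_state_reaches:
  assumes "t n = 1" and "\<forall>i<n. 2 \<le> t i" and "n < c"
  shows "search_state t c = Suc (Suc n)"
  using \<open>n < c\<close>
proof (induction c)
  case (Suc c)
  have "search_state t c' = 1" if "c' \<le> n" for c'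
    using that
  proof (induction c')
    case (Suc c')
    then have "2 \<le> t c'" using assms(2) by simp
    with Suc show ?case by simp
  qed simp
  with Suc assms(1) show ?case by (cases "c = n") auto
qed simp

fun clocked_eval :: "nat set \<Rightarrow> nat \<Rightarrow> recf \<Rightarrow> nat list \<Rightarrow> nat" where
  "clocked_eval X s Zero xs = 1"
| "clocked_eval X s Succ xs = Suc (Suc (arg xs 0))"
| "clocked_eval X s (Proj i) xs = Suc (arg xs i)"
| "clocked_eval X s Orc xs = Suc (if arg xs 0 \<in> X then 1 else 0)"
| "clocked_eval X s (Comp f gs) xs =
     (if list_all (\<lambda>g. clocked_eval X s g xs \<noteq> 0) gs
      then clocked_eval X s f (map (\<lambda>g. clocked_eval X s g xs - 1) gs) else 0)"
| "clocked_eval X s (Prec f g) xs = (case xs of [] \<Rightarrow> 0 | n # ys \<Rightarrow>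
     rec_nat (clocked_eval X s f ys)
       (\<lambda>m r. if r = 0 then 0 else clocked_eval X s g (m # (r - 1) # ys)) n)"
| "clocked_eval X s (Mn f) xs = search_state (\<lambda>c. clocked_eval X s f (c # xs)) s - 1"

text \<open>One step of the search loop, run on \<open>c # S # s # xs\<close> with \<open>F\<close> computing the
  lifted value of the searched function at \<open>c\<close>.\<close>
definition search_step :: "recf \<Rightarrow> recf" where
  "search_step F = ifz (Comp Pred [Proj 1])
     (ifz (Proj 1) Zero
       (ifz F Zero (ifz (Comp Pred [F]) (Comp Succ [Comp Succ [Proj 0]]) (Comp Succ [Zero]))))
     (Proj 1)"

text \<open>The arity \<open>k\<close> of the simulated program is needed to rearrange the arguments of
  recursions and searches.\<close>
fun clocked_prog :: "nat \<Rightarrow> recf \<Rightarrow> recf" where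
  "clocked_prog k Zero = Comp Succ [Zero]"
| "clocked_prog k Succ = Comp Succ [Comp Succ [Proj 1]]"
| "clocked_prog k (Proj i) = Comp Succ [Proj (Suc i)]"
| "clocked_prog k Orc = Comp Succ [Comp Orc [Proj 1]]"
| "clocked_prog k (Comp f gs) = guard_nonzero (map (clocked_prog k) gs)
     (Comp (clocked_prog (length gs) f) (Proj 0 # map (\<lambda>g. Comp Pred [clocked_prog k g]) gs))"
| "clocked_prog k (Prec f g) = (case k of 0 \<Rightarrow> Zero | Suc j \<Rightarrow>
     Comp (Prec (clocked_prog j f)
       (ifz (Proj 1) Zero (Comp (clocked_prog (Suc (Suc j)) g)
          (Proj 2 # Proj 0 # Comp Pred [Proj 1] # map (\<lambda>i. Proj (i + 3)) [0..<j]))))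
      (Proj 1 # Proj 0 # map (\<lambda>i. Proj (i + 2)) [0..<j]))"
| "clocked_prog k (Mn f) = Comp Pred [Comp
     (Prec (Comp Succ [Zero])
       (search_step (Comp (clocked_prog (Suc k) f) (Proj 2 # Proj 0 # map (\<lambda>i. Proj (i + 3)) [0..<k]))))
     (Proj 0 # Proj 0 # map (\<lambda>i. Proj (i + 1)) [0..<k])]"

lemma eval_search_step:
  assumes "eval X F (c # S # ys) (t c)"
  shows "eval X (search_step F) (c # S # ys)
    (if S = 1 then (if t c = 0 then 0 else if t c = 1 then Suc (Suc c) else 1) else S)"
proof -
  have "eval X (Comp Succ [Comp Succ [Proj 0]]) (c # S # ys) (Suc (Suc c))"
    using eval_Comp1[OF eval_Comp1[OF eval.proj[of X 0 "c # S # ys"] eval.succ] eval.succ] by simp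
  then show ?thesis unfolding search_step_def
    by (rule eval_ifz[OF eval_Comp_Pred[OF eval.proj] eval_ifz[OF eval.proj eval.zero
          eval_ifz[OF assms eval.zero eval_ifz[OF eval_Comp_Pred[OF assms] _ eval_const_1]]]
          eval.proj, THEN eval_result_cong]) auto
qed

lemma eval_clocked_prog_Prec:
  assumes f: "\<And>s ys. length ys = j \<Longrightarrow> eval X (clocked_prog j f) (s # ys) (clocked_eval X s f ys)"
    and g: "\<And>s ys. length ys = Suc (Suc j) \<Longrightarrow>
      eval X (clocked_prog (Suc (Suc j)) g) (s # ys) (clocked_eval X s g ys)"
    and "length xs = Suc j"
  shows "eval X (clocked_prog (Suc j) (Prec f g)) (s # xs) (clocked_eval X s (Prec f g) xs)"
proof -
  from \<open>length xs = Suc j\<close> obtain n ys where xs: "xs = n # ys" and ys: "length ys = j"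
    by (cases xs) auto
  have step: "eval X (ifz (Proj 1) Zero (Comp (clocked_prog (Suc (Suc j)) g)
      (Proj 2 # Proj 0 # Comp Pred [Proj 1] # map (\<lambda>i. Proj (i + 3)) [0..<j])))
    (m # r # s # ys) (if r = 0 then 0 else clocked_eval X s g (m # (r - 1) # ys))" for m r
  proof -
    have args: "list_all2 (\<lambda>h y. eval X h (m # r # s # ys) y)
        (Proj 2 # Proj 0 # Comp Pred [Proj 1] # map (\<lambda>i. Proj (i + 3)) [0..<j]) (s # m # (r - 1) # ys)"
      using eval_Proj_shifted[of "[m, r, s]" 3 X ys] ys eval.proj[of X 2 "m # r # s # ys"]
        eval.proj[of X 0 "m # r # s # ys"] eval_Comp_Pred[OF eval.proj[of X 1 "m # r # s # ys"]]
      by simp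
    have "length (m # (r - 1) # ys) = Suc (Suc j)" using ys by simp
    from eval_ifz[OF eval.proj[of X 1 "m # r # s # ys"] eval.zero eval_Comp[OF args g[OF this]]]
    show ?thesis by simp
  qed
  have "list_all2 (\<lambda>h y. eval X h (s # n # ys) y)
      (Proj 1 # Proj 0 # map (\<lambda>i. Proj (i + 2)) [0..<j]) (n # s # ys)"
    using eval_Proj_shifted[of "[s, n]" 2 X ys] ys eval.proj[of X 1 "s # n # ys"] eval.proj[of X 0 "s # n # ys"]
    by simp
  from eval_Comp[OF this eval_Prec_total[OF f[OF ys] step]] show ?thesis
    by (simp add: xs)
qed

lemma eval_clocked_prog_Mn:
  assumes f: "\<And>s ys. length ys = Suc k \<Longrightarrow>
      eval X (clocked_prog (Suc k) f) (s # ys) (clocked_eval X s f ys)"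
    and xs: "length xs = k"
  shows "eval X (clocked_prog k (Mn f)) (s # xs) (clocked_eval X s (Mn f) xs)"
proof -
  let ?t = "\<lambda>c. clocked_eval X s f (c # xs)"
  have "eval X (Comp (clocked_prog (Suc k) f) (Proj 2 # Proj 0 # map (\<lambda>i. Proj (i + 3)) [0..<k]))
      (c # S # s # xs) (?t c)" for c S
  proof -
    have "list_all2 (\<lambda>h y. eval X h (c # S # s # xs) y)
        (Proj 2 # Proj 0 # map (\<lambda>i. Proj (i + 3)) [0..<k]) (s # c # xs)"
      using eval_Proj_shifted[of "[c, S, s]" 3 X xs] xs eval.proj[of X 2 "c # S # s # xs"]
        eval.proj[of X 0 "c # S # s # xs"]
      by simp
    then show ?thesis using eval_Comp[OF _ f] xs by simp
  qed
  then have loop: "eval X (Prec (Comp Succ [Zero]) (search_step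
      (Comp (clocked_prog (Suc k) f) (Proj 2 # Proj 0 # map (\<lambda>i. Proj (i + 3)) [0..<k]))))
    (c # s # xs) (search_state ?t c)" for c
    unfolding search_state_def by (rule eval_Prec_total[OF eval_const_1 eval_search_step])
  have "list_all2 (\<lambda>h y. eval X h (s # xs) y) (Proj 0 # Proj 0 # map (\<lambda>i. Proj (i + 1)) [0..<k])
      (s # s # xs)"
    using eval_Proj_shifted[of "[s]" 1 X xs] xs eval.proj[of X 0 "s # xs"] by simp
  from eval_Comp_Pred[OF eval_Comp[OF this loop]] show ?thesis by simp
qed

lemma eval_clocked_prog:
  "length xs = k \<Longrightarrow> eval X (clocked_prog k f) (s # xs) (clocked_eval X s f xs)"
proof (induction f arbitrary: k xs s)
  case Zero
  show ?case using eval_const_1 by simp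
next
  case Succ
  show ?case using eval_Comp1[OF eval_Comp1[OF eval.proj[of X 1 "s # xs"] eval.succ] eval.succ] by simp
next
  case (Proj i)
  show ?case using eval_Comp1[OF eval.proj[of X "Suc i" "s # xs"] eval.succ] by simp
next
  case Orc
  show ?case using eval_Comp1[OF eval_Comp1[OF eval.proj[of X 1 "s # xs"] eval.orc] eval.succ] by simp
next
  case (Comp f gs)
  let ?ys = "map (\<lambda>g. clocked_eval X s g xs) gs"
  have guards: "list_all2 (\<lambda>h y. eval X h (s # xs) y) (map (clocked_prog k) gs) ?ys"
    using Comp by (auto simp: list_all2_conv_all_nth)
  have "list_all2 (\<lambda>h y. eval X h (s # xs) y) (map (\<lambda>g. Comp Pred [clocked_prog k g]) gs)
      (map (\<lambda>g. clocked_eval X s g xs - 1) gs)"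
    using eval_Comp_Pred[OF Comp.IH(2)[OF nth_mem Comp.prems]] by (auto simp: list_all2_conv_all_nth)
  then have "list_all2 (\<lambda>h y. eval X h (s # xs) y)
      (Proj 0 # map (\<lambda>g. Comp Pred [clocked_prog k g]) gs) (s # map (\<lambda>g. clocked_eval X s g xs - 1) gs)"
    using eval.proj[of X 0 "s # xs"] by simp
  from eval_guard_nonzero[OF guards eval_Comp[OF this Comp.IH(1)]] show ?case
    by (simp add: list.pred_map o_def)
next
  case (Prec f g)
  show ?case
  proof (cases k)
    case 0
    then show ?thesis using Prec.prems eval.zero by simp
  next
    case (Suc j)
    then show ?thesis using eval_clocked_prog_Prec[OF Prec.IH] Prec.prems by simp
  qed
next
  case (Mn f)
  then show ?case by (intro eval_clocked_prog_Mn) auto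
qed

lemma clocked_eval_sound: "clocked_eval X s f xs = Suc v \<Longrightarrow> eval X f xs v"
proof (induction f arbitrary: xs v)
  case (Comp f gs)
  let ?ys = "map (\<lambda>g. clocked_eval X s g xs - 1) gs"
  from Comp.prems have defined: "list_all (\<lambda>g. clocked_eval X s g xs \<noteq> 0) gs"
    and "clocked_eval X s f ?ys = Suc v"
    by (auto split: if_splits)
  then have "eval X f ?ys v" using Comp.IH(1) by blast
  moreover have "eval X (gs ! i) xs (?ys ! i)" if "i < length gs" for i
    using Comp.IH(2)[OF nth_mem[OF that]] defined that by (simp add: list_all_length)
  ultimately show ?case by (intro eval.comp) auto
next
  case (Prec f g)
  then obtain n ys where xs: "xs = n # ys" by (cases xs) auto
  define R where "R = rec_nat (clocked_eval X s f ys)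
    (\<lambda>m r. if r = 0 then 0 else clocked_eval X s g (m # (r - 1) # ys))"
  have "R m = Suc v \<Longrightarrow> eval X (Prec f g) (m # ys) v" for m v
  proof (induction m arbitrary: v)
    case 0
    then show ?case using Prec.IH(1) by (auto simp: R_def intro: eval.prec0)
  next
    case (Suc m)
    then obtain r where "R m = Suc r" and "clocked_eval X s g (m # r # ys) = Suc v"
      by (cases "R m") (simp_all add: R_def)
    then show ?case using Suc.IH Prec.IH(2) by (blast intro: eval.precS)
  qed
  then show ?case using Prec.prems by (simp add: xs R_def)
next
  case (Mn f)
  let ?t = "\<lambda>c. clocked_eval X s f (c # xs)"
  from Mn.prems have "search_state ?t s = Suc (Suc v)" by simp
  then have "?t v = 1" and above_1: "\<forall>i<v. 2 \<le> ?t i" using search_state_found by blast+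
  then have "eval X f (v # xs) 0" using Mn.IH by simp
  moreover have "eval X f (i # xs) (?t i - 1)" and "?t i - 1 > 0" if "i < v" for i
    using Mn.IH[of "i # xs" "?t i - 1"] above_1 that by auto
  ultimately show ?case by (blast intro: eval.mn)
qed (auto intro: eval.zero eval.succ eval.proj eval.orc[THEN eval_result_cong])

lemma clocked_eval_complete:
  "eval X f xs v \<Longrightarrow> eventually (\<lambda>s. clocked_eval X s f xs = Suc v) sequentially"
proof (induction rule: eval.induct)
  case (comp ys gs xs f v)
  have "eventually (\<lambda>s. \<forall>i\<in>{..<length gs}. clocked_eval X s (gs ! i) xs = Suc (ys ! i)) sequentially"
    using comp.IH(1) by (intro eventually_ball_finite) auto
  with comp.IH(2) show ?case
  proof (rule eventually_elim2)
    fix s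
    assume "\<forall>i\<in>{..<length gs}. clocked_eval X s (gs ! i) xs = Suc (ys ! i)"
      and "clocked_eval X s f ys = Suc v"
    moreover from calculation have "map (\<lambda>g. clocked_eval X s g xs - 1) gs = ys"
      using comp.hyps(1) by (intro nth_equalityI) auto
    ultimately show "clocked_eval X s (Comp f gs) xs = Suc v"
      by (auto simp: list_all_length)
  qed
next
  case (precS f g n xs r v)
  from precS.IH show ?case by (rule eventually_elim2) simp
next
  case (mn f n xs)
  have "eventually (\<lambda>s. \<forall>m\<in>{..<n}. 2 \<le> clocked_eval X s f (m # xs)) sequentially"
  proof (intro eventually_ball_finite ballI)
    fix m assume "m \<in> {..<n}"
    with mn.IH(2) obtain w where "w > 0" and "eventually (\<lambda>s. clocked_eval X s f (m # xs) = Suc w) sequentially"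
      by auto
    then show "eventually (\<lambda>s. 2 \<le> clocked_eval X s f (m # xs)) sequentially"
      by (auto elim: eventually_mono)
  qed simp
  moreover note mn.IH(1) eventually_gt_at_top[of n]
  ultimately show ?case
    by eventually_elim (simp add: search_state_reaches)
qed simp_all

section \<open>Infinite c.e. sets have infinite decidable subsets\<close>

definition decidable_in :: "nat set \<Rightarrow> nat set \<Rightarrow> bool" where
  "decidable_in Z X \<longleftrightarrow> (\<exists>c. \<forall>q. eval X c [q] (if q \<in> Z then 1 else 0))"

lemma ce_in_obtain_approximation:
  assumes "ce_in B X"
  obtains c and approx :: "nat \<Rightarrow> nat \<Rightarrow> nat"
  where "\<And>t x. eval X c [t, x] (approx t x)"
    and "\<And>t x. approx t x \<noteq> 0 \<Longrightarrow> x \<in> B"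
    and "\<And>x. x \<in> B \<Longrightarrow> eventually (\<lambda>t. approx t x \<noteq> 0) sequentially"
proof -
  from assms obtain g where B: "x \<in> B \<longleftrightarrow> (\<exists>v. eval X g [x] v)" for x
    unfolding ce_in_def by blast
  show thesis
  proof
    show "eval X (clocked_prog 1 g) [t, x] (clocked_eval X t g [x])" for t x
      using eval_clocked_prog[of "[x]" 1] by simp
    show "x \<in> B" if "clocked_eval X t g [x] \<noteq> 0" for t x
      using that clocked_eval_sound[of X t g "[x]"] B by (cases "clocked_eval X t g [x]") auto
    show "eventually (\<lambda>t. clocked_eval X t g [x] \<noteq> 0) sequentially" if "x \<in> B" for x
      using that B clocked_eval_complete by (fastforce elim: eventually_mono)
  qed
qed

definition scan :: "(nat \<Rightarrow> nat \<Rightarrow> nat) \<Rightarrow> nat \<Rightarrow> nat \<Rightarrow> nat \<Rightarrow> nat" where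
  "scan approx t p = rec_nat 0 (\<lambda>i a. if p \<le> i \<and> approx t i \<noteq> 0 then Suc i else a)"

lemma scan_0 [simp]: "scan approx t p 0 = 0"
  and scan_Suc [simp]:
    "scan approx t p (Suc i) = (if p \<le> i \<and> approx t i \<noteq> 0 then Suc i else scan approx t p i)"
  by (simp_all add: scan_def)

lemma scan_eq_Suc: "scan approx t p i = Suc x \<Longrightarrow> p \<le> x \<and> approx t x \<noteq> 0"
  by (induction i) (auto split: if_splits)

lemma scan_nonzero: "x < i \<Longrightarrow> p \<le> x \<Longrightarrow> approx t x \<noteq> 0 \<Longrightarrow> scan approx t p i \<noteq> 0"
  by (induction i) (auto simp: less_Suc_eq)

lemma scan_eventually_nonzero:
  assumes "infinite B" and "\<And>x. x \<in> B \<Longrightarrow> eventually (\<lambda>t. approx t x \<noteq> 0) sequentially"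
  shows "\<exists>t. scan approx t p (Suc t) \<noteq> 0"
proof -
  obtain x where "x \<in> B" and "\<not> x \<le> p"
    using assms(1) finite_nat_set_iff_bounded_le by blast
  moreover from assms(2)[OF \<open>x \<in> B\<close>] obtain N where "\<forall>t\<ge>N. approx t x \<noteq> 0"
    by (auto simp: eventually_sequentially)
  ultimately have "scan approx (max N x) p (Suc (max N x)) \<noteq> 0"
    by (intro scan_nonzero[of x]) auto
  then show ?thesis by blast
qed

definition scan_prog :: "recf \<Rightarrow> recf" where
  "scan_prog c = Prec Zero (ifz (Comp Monus [Proj 3, Proj 0])
     (ifz (Comp c [Proj 2, Proj 0]) (Proj 1) (Comp Succ [Proj 0])) (Proj 1))"

lemma eval_scan_prog:
  assumes "\<And>t x. eval X c [t, x] (approx t x)"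
  shows "eval X (scan_prog c) [i, t, p] (scan approx t p i)"
  unfolding scan_prog_def scan_def
proof (rule eval_Prec_total[OF eval.zero])
  fix m r
  let ?xs = "[m, r, t, p]"
  show "eval X (ifz (Comp Monus [Proj 3, Proj 0])
      (ifz (Comp c [Proj 2, Proj 0]) (Proj 1) (Comp Succ [Proj 0])) (Proj 1)) ?xs
    (if p \<le> m \<and> approx t m \<noteq> 0 then Suc m else r)"
    by (rule eval_ifz[OF eval_Comp_Monus[OF eval.proj[of X 3 ?xs] eval.proj[of X 0 ?xs]]
          eval_ifz[OF eval_Comp2[OF eval.proj[of X 2 ?xs] eval.proj[of X 0 ?xs] assms] eval.proj
            eval_Comp1[OF eval.proj[of X 0 ?xs] eval.succ]] eval.proj, THEN eval_result_cong])
      auto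
qed

lemma infinite_ce_in_obtain_selector:
  assumes "ce_in B X" and "infinite B"
  obtains N sel where "\<And>p. eval X N [p] (sel p)" and "\<And>p. sel p \<in> B" and "\<And>p. p \<le> sel p"
proof -
  obtain c approx where c: "\<And>t x. eval X c [t, x] (approx t x)"
    and sound: "\<And>t x. approx t x \<noteq> 0 \<Longrightarrow> x \<in> B"
    and complete: "\<And>x. x \<in> B \<Longrightarrow> eventually (\<lambda>t. approx t x \<noteq> 0) sequentially"
    using ce_in_obtain_approximation[OF assms(1)] by blast
  \<comment> \<open>Inspecting only candidates \<open>x \<le> t\<close> at stage \<open>t\<close> turns the search over pairs
    \<open>(t, x)\<close> into a search over \<open>t\<close> alone.\<close>
  define found where "found p t = scan approx t p (Suc t)" for p t
  define stage where "stage p = (LEAST t. found p t \<noteq> 0)" for p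
  have found_stage: "found p (stage p) \<noteq> 0" for p
    unfolding stage_def found_def
    using scan_eventually_nonzero[OF assms(2) complete] by (rule LeastI_ex)
  let ?Found = "Comp (scan_prog c) [Comp Succ [Proj 0], Proj 0, Proj 1]"
  have eval_Found: "eval X ?Found [t, p] (found p t)" for t p
    unfolding found_def
    using eval_Comp3[OF eval_Comp1[OF eval.proj[of X 0 "[t, p]"] eval.succ]
        eval.proj[of X 0 "[t, p]"] eval.proj[of X 1 "[t, p]"] eval_scan_prog[OF c]]
    by simp
  have "eval X (Mn (Comp Monus [Comp Succ [Zero], ?Found])) [p] (LEAST t. 1 - found p t = 0)" for p
  proof (rule eval_Mn_Least)
    show "1 - found p (stage p) = 0" using found_stage[of p] by simp
  qed (rule eval_Comp_Monus[OF eval_const_1 eval_Found])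
  then have "eval X (Mn (Comp Monus [Comp Succ [Zero], ?Found])) [p] (stage p)" for p
    by (simp add: stage_def Suc_le_eq)
  then have "eval X (Comp Pred [Comp ?Found [Mn (Comp Monus [Comp Succ [Zero], ?Found]), Proj 0]]) [p]
      (found p (stage p) - 1)" for p
    using eval_Comp_Pred[OF eval_Comp2[OF _ eval.proj[of X 0 "[p]"] eval_Found]] by simp
  moreover have "found p (stage p) - 1 \<in> B \<and> p \<le> found p (stage p) - 1" for p
    using found_stage[of p] scan_eq_Suc sound unfolding found_def
    by (metis Suc_pred' not_gr_zero)
  ultimately show thesis by (intro that[where sel = "\<lambda>p. found p (stage p) - 1"]) auto
qed

lemma decidable_in_range_strict_mono:
  assumes E: "\<And>n. eval X E [n] (e n)" and "strict_mono e"
  shows "decidable_in (range e) X"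
proof -
  define index where "index q = (LEAST n. q - e n = 0)" for q
  have bound: "q \<le> e (index q)" for q
    using LeastI_ex[of "\<lambda>n. q - e n = 0"] strict_mono_imp_increasing[OF \<open>strict_mono e\<close>, of q]
    unfolding index_def by auto
  have range_iff: "q \<in> range e \<longleftrightarrow> e (index q) - q = 0" for q
  proof
    assume "q \<in> range e"
    then obtain m where m: "q = e m" by blast
    then have "index q \<le> m" unfolding index_def by (intro Least_le) simp
    then show "e (index q) - q = 0"
      using bound[of q] m strict_mono_less_eq[OF \<open>strict_mono e\<close>] by (simp add: le_antisym)
  next
    assume "e (index q) - q = 0"
    then show "q \<in> range e" using bound[of q] by (metis diff_is_0_eq le_antisym rangeI)
  qed
  let ?Index = "Mn (Comp Monus [Proj 1, Comp E [Proj 0]])"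
  have "eval X ?Index [q] (index q)" for q
    unfolding index_def
  proof (rule eval_Mn_Least)
    show "eval X (Comp Monus [Proj 1, Comp E [Proj 0]]) [n, q] (q - e n)" for n
      using eval_Comp_Monus[OF eval.proj[of X 1 "[n, q]"] eval_Comp1[OF eval.proj[of X 0 "[n, q]"] E]]
      by simp
    show "q - e q = 0" using strict_mono_imp_increasing[OF \<open>strict_mono e\<close>] by simp
  qed
  then have "eval X (ifz (Comp Monus [Comp E [?Index], Proj 0]) (Comp Succ [Zero]) Zero) [q]
      (if q \<in> range e then 1 else 0)" for q
    using eval_ifz[OF eval_Comp_Monus[OF eval_Comp1[OF _ E] eval.proj[of X 0 "[q]"]] eval_const_1 eval.zero]
      range_iff by simp
  then show ?thesis unfolding decidable_in_def by blast
qed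

lemma infinite_ce_in_obtain_decidable_subset:
  assumes "ce_in B X" and "infinite B"
  obtains Z where "Z \<subseteq> B" and "infinite Z" and "decidable_in Z X"
proof -
  obtain N sel where N: "\<And>p. eval X N [p] (sel p)"
    and sel: "\<And>p. sel p \<in> B" "\<And>p. p \<le> sel p"
    using infinite_ce_in_obtain_selector[OF assms] by blast
  define e where "e = rec_nat (sel 0) (\<lambda>n r. sel (Suc r))"
  have E: "eval X (Prec (Comp N [Zero]) (Comp N [Comp Succ [Proj 1]])) [n] (e n)" for n
    unfolding e_def
  proof (rule eval_Prec_total)
    show "eval X (Comp N [Zero]) [] (sel 0)" by (rule eval_Comp1[OF eval.zero N])
    show "eval X (Comp N [Comp Succ [Proj 1]]) [m, r] (sel (Suc r))" for m r
      using eval_Comp1[OF eval_Comp1[OF eval.proj[of X 1 "[m, r]"] eval.succ] N] by simp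
  qed
  have mono: "strict_mono e"
    unfolding strict_mono_Suc_iff e_def by (auto intro: Suc_le_lessD sel(2))
  have "e n \<in> B" for n
    unfolding e_def using sel(1) by (cases n) simp_all
  then have "range e \<subseteq> B" by blast
  moreover have "infinite (range e)"
    using mono strict_mono_imp_inj_on finite_imageD infinite_UNIV_nat by blast
  moreover have "decidable_in (range e) X"
    using E mono by (rule decidable_in_range_strict_mono)
  ultimately show thesis by (rule that)
qed

section \<open>Oracle substitution\<close>

primrec subst_oracle :: "recf \<Rightarrow> recf \<Rightarrow> recf" where
  "subst_oracle c Zero = Zero"
| "subst_oracle c Succ = Succ"
| "subst_oracle c (Proj i) = Proj i"
| "subst_oracle c Orc = Comp c [Proj 0]"
| "subst_oracle c (Comp f gs) = Comp (subst_oracle c f) (map (subst_oracle c) gs)"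
| "subst_oracle c (Prec f g) = Prec (subst_oracle c f) (subst_oracle c g)"
| "subst_oracle c (Mn f) = Mn (subst_oracle c f)"

context
  fixes c :: recf and Y Z :: "nat set"
  assumes decides: "\<And>q. eval Y c [q] (if q \<in> Z then 1 else 0)"
begin

lemma eval_subst_oracle: "eval Z f xs v \<Longrightarrow> eval Y (subst_oracle c f) xs v"
proof (induction rule: eval.induct)
  case (orc xs)
  show ?case using eval_Comp1[OF eval.proj[of Y 0 xs] decides] by simp
qed (auto intro: eval.intros)

lemma eval_subst_oracleD: "eval Y (subst_oracle c f) xs v \<Longrightarrow> eval Z f xs v"
proof (induction f arbitrary: xs v)
  case Orc
  then obtain y where "eval Y (Proj 0) xs y" and "eval Y c [y] v"
    by (auto elim!: eval_CompE simp: length_Suc_conv)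
  then have "v = (if arg xs 0 \<in> Z then 1 else 0)"
    using eval_deterministic decides eval.proj by blast
  then show ?case using eval.orc by simp
next
  case (Comp f gs)
  from Comp.prems obtain ys where "length ys = length gs"
    and "\<forall>i<length gs. eval Y (subst_oracle c (gs ! i)) xs (ys ! i)"
    and "eval Y (subst_oracle c f) ys v"
    by (auto elim: eval_CompE)
  then show ?case using Comp.IH by (intro eval.comp) auto
next
  case (Prec f g)
  have "eval Y (Prec (subst_oracle c f) (subst_oracle c g)) (n # ys) v \<Longrightarrow>
    eval Z (Prec f g) (n # ys) v" for n ys v
  proof (induction n arbitrary: v)
    case 0
    then show ?case using Prec.IH(1) by (auto elim: eval_PrecE intro: eval.prec0)
  next
    case (Suc n)
    from Suc.prems obtain r where "eval Y (Prec (subst_oracle c f) (subst_oracle c g)) (n # ys) r"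
      and "eval Y (subst_oracle c g) (n # r # ys) v"
      by (auto elim: eval_PrecE)
    then show ?case using Suc.IH Prec.IH(2) by (blast intro: eval.precS)
  qed
  with Prec.prems show ?case by (auto elim: eval_PrecE)
next
  case (Mn f)
  from Mn.prems have "eval Y (subst_oracle c f) (v # xs) 0"
    and "\<forall>m<v. \<exists>w>0. eval Y (subst_oracle c f) (m # xs) w"
    by (auto elim: eval_MnE)
  then show ?case using Mn.IH by (intro eval.mn) blast+
qed (auto elim: eval_ZeroE eval_SuccE eval_ProjE intro: eval.intros)

end

lemma ce_in_decidable_in_trans: "ce_in A Z \<Longrightarrow> decidable_in Z Y \<Longrightarrow> ce_in A Y"
  unfolding ce_in_def decidable_in_def
  by (meson eval_subst_oracle eval_subst_oracleD)

theorem theorem3p1: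
  fixes A B C :: "nat set"
  assumes "infinite B" and "infinite C"
    and "\<forall>Y. Y \<subseteq> B \<and> infinite Y \<longrightarrow> ce_in A Y"
    and "\<forall>Y. Y \<subseteq> C \<and> infinite Y \<longrightarrow> ce_in B Y"
  shows "\<forall>Y. Y \<subseteq> C \<and> infinite Y \<longrightarrow> ce_in A Y"
proof (intro allI impI)
  fix Y
  assume "Y \<subseteq> C \<and> infinite Y"
  then have "ce_in B Y" using assms(4) by blast
  then obtain Z where "Z \<subseteq> B" and "infinite Z" and "decidable_in Z Y"
    using infinite_ce_in_obtain_decidable_subset assms(1) by blast
  then show "ce_in A Y" using assms(3) ce_in_decidable_in_trans by blast
qed

end
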